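(* Let $G$ be a signed digraph and let $i\neq j$ be vertices such that $G$ has an arc from $i$ to $j$ and $d^{\mathrm{in}}_G(i)=d^{\mathrm{out}}_G(i)=d^{\mathrm{in}}_G(j)=1$. Let $H$ be the spanning subgraph obtained from $G$ by removing this arc, and let $h:Y\to Y$ be any degree-bounded finite dynamical system on $H$. Then there is no degree-bounded finite dynamical system $f:X\to X$ on $G$ that converges toward $h$ (in any number of steps).
   Context: A finite dynamical system (FDS) with $n$ components is a map $f=(f_1,\dots,f_n):X\to X$ where $X=X_1\times\cdots\times X_n$ and each $X_i$ is a nonempty finite interval of integers; $f^k$ denotes the $k$-fold composition. For FDSs $f:X\to X$ and $h:Y\to Y$ with $n$ components, $f$ converges toward $h$ in $k$ steps if $f^k(X)\subseteq h(Y)\subseteq Y\subseteq X$ and $f(x)=h(x)$ for all $x\in Y$. A signed digraph is a pair $G=(V,E)$ with $E\subseteq V\times V\times\{+,-\}$; $(j,i,s)\in E$ is an arc from $j$ to $i$ of sign $s$ (loops and parallel arcs of opposite sign allowed). The in-degree $d^{\mathrm{in}}_G(i)$ is the number of arcs entering $i$ and the out-degree $d^{\mathrm{out}}_G(i)$ the number of arcs leaving $i$ (positive and negative arcs counted separately). A spanning subgraph has the same vertex set and a subset of the arcs. The interaction graph of an FDS $f$ is the signed digraph on $\{1,\dots,n\}$ with a positive (resp. negative) arc from $j$ to $i$ iff there is $x\in X$ with $x_j<\max(X_j)$ such that $f_i(x+e_j)-f_i(x)$ is positive (resp. negative), $e_j$ the $j$-th unit vector. $f$ is an FDS on $G$ if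 $G$ is its interaction graph. $f$ is degree-bounded if, with $G$ its interaction graph, for every $i$: $|X_i|=2$ if $d^{\mathrm{out}}_G(i)=0<d^{\mathrm{in}}_G(i)$, and $|X_i|\le d^{\mathrm{out}}_G(i)+1$ otherwise. *)

theory Defs
  imports Main
begin

definition box :: "nat \<Rightarrow> (nat \<Rightarrow> int) \<Rightarrow> (nat \<Rightarrow> int) \<Rightarrow> (nat \<Rightarrow> int) set" where
  "box n lo hi = {x. (\<forall>i<n. lo i \<le> x i \<and> x i \<le> hi i) \<and> (\<forall>i\<ge>n. x i = 0)}"

definition is_FDS :: "nat \<Rightarrow> (nat \<Rightarrow> int) \<Rightarrow> (nat \<Rightarrow> int) \<Rightarrow> ((nat \<Rightarrow> int) \<Rightarrow> (nat \<Rightarrow> int)) \<Rightarrow> bool" where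
  "is_FDS n lo hi f \<longleftrightarrow> (\<forall>i<n. lo i \<le> hi i) \<and> (\<forall>x\<in>box n lo hi. f x \<in> box n lo hi)"

(* signed digraph on vertex set {0..<n}: arcs (j, i, s), s = True for +, False for - *)
definition signed_digraph :: "nat \<Rightarrow> (nat \<times> nat \<times> bool) set \<Rightarrow> bool" where
  "signed_digraph n E \<longleftrightarrow> E \<subseteq> {..<n} \<times> {..<n} \<times> UNIV"

definition indeg :: "(nat \<times> nat \<times> bool) set \<Rightarrow> nat \<Rightarrow> nat" where
  "indeg E i = card {(j, s). (j, i, s) \<in> E}"

definition outdeg :: "(nat \<times> nat \<times> bool) set \<Rightarrow> nat \<Rightarrow> nat" where
  "outdeg E i = card {(k, s). (i, k, s) \<in> E}"

definition unit_vec :: "nat \<Rightarrow> nat \<Rightarrow> int" where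
  "unit_vec j = (\<lambda>k. if k = j then 1 else 0)"

definition interaction_graph ::
  "nat \<Rightarrow> (nat \<Rightarrow> int) \<Rightarrow> (nat \<Rightarrow> int) \<Rightarrow> ((nat \<Rightarrow> int) \<Rightarrow> (nat \<Rightarrow> int)) \<Rightarrow> (nat \<times> nat \<times> bool) set" where
  "interaction_graph n lo hi f =
     {(j, i, s). j < n \<and> i < n \<and>
        (\<exists>x\<in>box n lo hi. x j < hi j \<and>
           (if s then f (\<lambda>k. x k + unit_vec j k) i - f x i > 0 else f (\<lambda>k. x k + unit_vec j k) i - f x i < 0))}"

definition degree_bounded ::
  "nat \<Rightarrow> (nat \<Rightarrow> int) \<Rightarrow> (nat \<Rightarrow> int) \<Rightarrow> ((nat \<Rightarrow> int) \<Rightarrow> (nat \<Rightarrow> int)) \<Rightarrow> bool" where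
  "degree_bounded n lo hi f \<longleftrightarrow>
     (let G = interaction_graph n lo hi f in
      \<forall>i<n. (if outdeg G i = 0 \<and> 0 < indeg G i
             then hi i - lo i + 1 = 2
             else hi i - lo i + 1 \<le> int (outdeg G i) + 1))"

definition converges_toward ::
  "nat \<Rightarrow> (nat \<Rightarrow> int) \<Rightarrow> (nat \<Rightarrow> int) \<Rightarrow> ((nat \<Rightarrow> int) \<Rightarrow> (nat \<Rightarrow> int)) \<Rightarrow>
   (nat \<Rightarrow> int) \<Rightarrow> (nat \<Rightarrow> int) \<Rightarrow> ((nat \<Rightarrow> int) \<Rightarrow> (nat \<Rightarrow> int)) \<Rightarrow> nat \<Rightarrow> bool" where
  "converges_toward n loX hiX f loY hiY h k \<longleftrightarrow>
     (f ^^ k) ` box n loX hiX \<subseteq> h ` box n loY hiY \<and>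
     h ` box n loY hiY \<subseteq> box n loY hiY \<and>
     box n loY hiY \<subseteq> box n loX hiX \<and>
     (\<forall>x\<in>box n loY hiY. f x = h x)"

end

theory Submission
  imports Defs
begin

text \<open>Since \<open>j\<close> has \<open>i\<close> as its only in-neighbour, \<open>f\<^sub>j\<close> depends on \<open>x\<^sub>i\<close> alone. Degree-boundedness
  forces \<open>|X\<^sub>i| \<le> 2\<close> (out-degree 1 in \<open>G\<close>) and \<open>|Y\<^sub>i| = 2\<close> (\<open>i\<close> becomes a sink of positive in-degree
  in \<open>H\<close>), so \<open>Y \<subseteq> X\<close> gives \<open>X\<^sub>i = Y\<^sub>i\<close>. Hence a witness of the arc \<open>i \<rightarrow> j\<close> of \<open>f\<close> can be
  moved into \<open>Y\<close>, where \<open>f = h\<close>, so \<open>h\<close> also has an arc \<open>i \<rightarrow> j\<close>; its sign must differ from the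
  removed one, contradicting \<open>d\<^sup>i\<^sup>n\<^sub>G(j) = 1\<close>.\<close>

lemma box_upd_in_box:
  assumes "x \<in> box n lo hi" and "lo k \<le> v" and "v \<le> hi k" and "k < n"
  shows "x(k := v) \<in> box n lo hi"
  using assms by (auto simp: box_def)

lemma unit_step_invariant_reset_coord:
  assumes step: "\<And>x. x \<in> box n lo hi \<Longrightarrow> x k < hi k \<Longrightarrow> g (\<lambda>m. x m + unit_vec k m) = g x"
    and "x \<in> box n lo hi" and "k < n"
  shows "g (x(k := lo k)) = g x"
  using assms(2)
proof (induction "nat (x k - lo k)" arbitrary: x)
  case 0
  then have "x k = lo k" using \<open>k < n\<close> by (auto simp: box_def)
  then show ?case by (metis fun_upd_triv)
next
  case (Suc d x)
  define x' where "x' = x(k := x k - 1)"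
  have bounds: "lo k < x k" "x k \<le> hi k" using Suc \<open>k < n\<close> by (auto simp: box_def)
  have x': "x' \<in> box n lo hi"
    unfolding x'_def using Suc.prems bounds \<open>k < n\<close> by (intro box_upd_in_box) auto
  have "(\<lambda>m. x' m + unit_vec k m) = x" by (auto simp: x'_def unit_vec_def)
  then have "g x = g x'" using step[OF x'] bounds by (simp add: x'_def)
  moreover have "g (x'(k := lo k)) = g x'" using Suc.hyps(1)[OF _ x'] Suc.hyps(2) by (simp add: x'_def)
  ultimately show ?case by (simp add: x'_def)
qed

lemma unit_step_invariant_off_imp_eq:
  assumes step: "\<And>x k. x \<in> box n lo hi \<Longrightarrow> k < n \<Longrightarrow> k \<notin> A \<Longrightarrow> x k < hi k \<Longrightarrow>
                   g (\<lambda>m. x m + unit_vec k m) = g x"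
    and x: "x \<in> box n lo hi" and y: "y \<in> box n lo hi" and agree: "\<forall>k\<in>A. x k = y k"
  shows "g x = g y"
proof -
  define reset where "reset m z = (\<lambda>k. if k < m \<and> k \<notin> A then lo k else z k)" for m z
  have reset: "reset m z \<in> box n lo hi \<and> g (reset m z) = g z"
    if "z \<in> box n lo hi" "m \<le> n" for z m
    using that(2)
  proof (induction m)
    case 0
    then show ?case using \<open>z \<in> box n lo hi\<close> by (simp add: reset_def)
  next
    case (Suc m)
    then have IH: "reset m z \<in> box n lo hi" "g (reset m z) = g z" by auto
    show ?case
    proof (cases "m \<in> A")
      case True
      then have "reset (Suc m) z = reset m z" by (auto simp: reset_def less_Suc_eq)
      then show ?thesis using IH by simp
    next
      case False
      then have eq: "reset (Suc m) z = (reset m z)(m := lo m)"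
        by (auto simp: reset_def less_Suc_eq)
      have "lo m \<le> z m" "z m \<le> hi m" using \<open>z \<in> box n lo hi\<close> Suc.prems by (auto simp: box_def)
      then have "lo m \<le> hi m" by simp
      have "g ((reset m z)(m := lo m)) = g (reset m z)"
        using unit_step_invariant_reset_coord[where g = g and k = m, OF step IH(1)] Suc.prems False by simp
      then show ?thesis
        unfolding eq using IH Suc.prems box_upd_in_box[OF IH(1) order_refl \<open>lo m \<le> hi m\<close>]
        by (metis Suc_le_lessD)
    qed
  qed
  have "reset n x = reset n y"
  proof
    fix k
    show "reset n x k = reset n y k"
      using x y agree by (cases "k < n") (auto simp: reset_def box_def)
  qed
  then show ?thesis using reset[OF x order_refl] reset[OF y order_refl] by simp
qed

lemma interaction_graph_arcI:
  assumes "x \<in> box n lo hi" and "k < n" and "i < n" and "x k < hi k"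
    and "f (\<lambda>m. x m + unit_vec k m) i \<noteq> f x i"
  shows "\<exists>s. (k, i, s) \<in> interaction_graph n lo hi f"
proof
  show "(k, i, f x i < f (\<lambda>m. x m + unit_vec k m) i) \<in> interaction_graph n lo hi f"
    using assms unfolding interaction_graph_def by auto
qed

lemma interaction_graph_arcE:
  assumes "(k, i, s) \<in> interaction_graph n lo hi f"
  obtains x where "x \<in> box n lo hi" and "k < n" and "i < n" and "x k < hi k"
    and "f (\<lambda>m. x m + unit_vec k m) i \<noteq> f x i"
  using assms unfolding interaction_graph_def by (auto split: if_splits)

lemma component_eq_if_agree_on_in_neighbours:
  assumes "i < n" and "x \<in> box n lo hi" and "y \<in> box n lo hi"
    and "\<forall>k s. (k, i, s) \<in> interaction_graph n lo hi f \<longrightarrow> x k = y k"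
  shows "f x i = f y i"
proof -
  have step: "f (\<lambda>m. z m + unit_vec k m) i = f z i"
    if "z \<in> box n lo hi" "k < n" "k \<notin> {k. \<exists>s. (k, i, s) \<in> interaction_graph n lo hi f}"
      "z k < hi k" for z k
    using that interaction_graph_arcI[OF that(1,2) \<open>i < n\<close> that(4)] by blast
  show ?thesis
    using unit_step_invariant_off_imp_eq[where g = "\<lambda>z. f z i", OF step assms(2,3)] assms(4) by blast
qed

lemma indeg_one_unique_arc:
  assumes "indeg E j = 1" and "(i, j, s) \<in> E" and "(k, j, b) \<in> E"
  shows "k = i \<and> b = s"
proof -
  obtain a where "{(k, s). (k, j, s) \<in> E} = {a}"
    using assms(1) card_1_singletonE unfolding indeg_def by blast
  moreover have "(i, s) \<in> {(k, s). (k, j, s) \<in> E}" "(k, b) \<in> {(k, s). (k, j, s) \<in> E}"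
    using assms(2,3) by simp_all
  ultimately show ?thesis by auto
qed

lemma outdeg_one_unique_arc:
  assumes "outdeg E i = 1" and "(i, j, s) \<in> E" and "(i, k, b) \<in> E"
  shows "k = j \<and> b = s"
proof -
  obtain a where "{(k, s). (i, k, s) \<in> E} = {a}"
    using assms(1) card_1_singletonE unfolding outdeg_def by blast
  moreover have "(j, s) \<in> {(k, s). (i, k, s) \<in> E}" "(k, b) \<in> {(k, s). (i, k, s) \<in> E}"
    using assms(2,3) by simp_all
  ultimately show ?thesis by auto
qed

lemma outdeg_remove_only_out_arc:
  assumes "outdeg E i = 1" and "(i, j, s) \<in> E"
  shows "outdeg (E - {(i, j, s)}) i = 0"
proof -
  have "{(k, b). (i, k, b) \<in> E - {(i, j, s)}} = {}"
    using outdeg_one_unique_arc[OF assms] by blast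
  then show ?thesis unfolding outdeg_def by (metis card.empty)
qed

lemma indeg_remove_arc_elsewhere:
  assumes "i \<noteq> j"
  shows "indeg (E - {(i, j, s)}) i = indeg E i"
proof -
  have "{(k, b). (k, i, b) \<in> E - {(i, j, s)}} = {(k, b). (k, i, b) \<in> E}" using assms by blast
  then show ?thesis unfolding indeg_def by simp
qed

lemma degree_bounded_sink_width:
  assumes "degree_bounded n lo hi f" and "i < n"
    and "outdeg (interaction_graph n lo hi f) i = 0" and "0 < indeg (interaction_graph n lo hi f) i"
  shows "hi i = lo i + 1"
  using assms unfolding degree_bounded_def Let_def by force

lemma degree_bounded_width_le_outdeg:
  assumes "degree_bounded n lo hi f" and "i < n" and "0 < outdeg (interaction_graph n lo hi f) i"
  shows "hi i - lo i \<le> int (outdeg (interaction_graph n lo hi f) i)"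
  using assms unfolding degree_bounded_def Let_def by force

lemma box_subset_bounds:
  assumes "box n loY hiY \<subseteq> box n loX hiX" and "\<forall>k<n. loY k \<le> hiY k" and "i < n"
  shows "loX i \<le> loY i \<and> hiY i \<le> hiX i"
proof -
  define y where "y = (\<lambda>k. if k < n then loY k else 0)"
  have y: "y \<in> box n loY hiY" using assms(2) by (auto simp: box_def y_def)
  have "y(i := hiY i) \<in> box n loY hiY"
    using assms(2,3) by (intro box_upd_in_box[OF y]) auto
  then have "y \<in> box n loX hiX" "y(i := hiY i) \<in> box n loX hiX" using y assms(1) by blast+
  then have "loX i \<le> y i" "(y(i := hiY i)) i \<le> hiX i" using assms(3) unfolding box_def by blast+
  then show ?thesis using assms(3) by (simp add: y_def)
qed

lemma arc_survives_convergence: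
  assumes sub: "box n loY hiY \<subseteq> box n loX hiX" and agree: "\<forall>y\<in>box n loY hiY. f y = h y"
    and nonempty: "\<forall>k<n. loY k \<le> hiY k"
    and lo_eq: "loX i = loY i" and hi_eq: "hiX i = hiY i"
    and arc: "(i, j, s) \<in> interaction_graph n loX hiX f"
    and only_in: "\<forall>k b. (k, j, b) \<in> interaction_graph n loX hiX f \<longrightarrow> k = i"
  shows "\<exists>b. (i, j, b) \<in> interaction_graph n loY hiY h"
proof -
  obtain x where x: "x \<in> box n loX hiX" and "i < n" "j < n" and xi: "x i < hiX i"
    and changes: "f (\<lambda>m. x m + unit_vec i m) j \<noteq> f x j"
    using arc by (rule interaction_graph_arcE)
  define y0 where "y0 = (\<lambda>k. if k < n then loY k else 0)"
  have y0: "y0 \<in> box n loY hiY" using nonempty by (auto simp: box_def y0_def)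
  define y where "y = y0(i := x i)"
  define x' where "x' = (\<lambda>m. x m + unit_vec i m)"
  have y: "y \<in> box n loY hiY"
    unfolding y_def using x xi lo_eq hi_eq \<open>i < n\<close> by (intro box_upd_in_box[OF y0]) (auto simp: box_def)
  have y': "(\<lambda>m. y m + unit_vec i m) \<in> box n loY hiY"
    using y xi hi_eq \<open>i < n\<close> by (auto simp: box_def y_def unit_vec_def)
  have x': "x' \<in> box n loX hiX" using x xi \<open>i < n\<close> by (auto simp: box_def x'_def unit_vec_def)
  have "f x j = f y j"
    using component_eq_if_agree_on_in_neighbours[where f = f, OF \<open>j < n\<close> x subsetD[OF sub y]]
      only_in by (auto simp: y_def)
  moreover have "f x' j = f (\<lambda>m. y m + unit_vec i m) j"
    using component_eq_if_agree_on_in_neighbours[where f = f, OF \<open>j < n\<close> x' subsetD[OF sub y']]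
      only_in by (auto simp: x'_def y_def unit_vec_def)
  ultimately have "f (\<lambda>m. y m + unit_vec i m) j \<noteq> f y j"
    using changes by (simp add: x'_def)
  moreover have "f y = h y" "f (\<lambda>m. y m + unit_vec i m) = h (\<lambda>m. y m + unit_vec i m)"
    using agree y y' by blast+
  moreover have "y i < hiY i" using xi hi_eq by (simp add: y_def)
  ultimately show ?thesis using interaction_graph_arcI[OF y \<open>i < n\<close> \<open>j < n\<close>] by simp
qed

theorem mainTheorem4:
  fixes n :: nat and E :: "(nat \<times> nat \<times> bool) set" and i j :: nat and s :: bool
    and loY hiY :: "nat \<Rightarrow> int" and h :: "(nat \<Rightarrow> int) \<Rightarrow> (nat \<Rightarrow> int)"
  assumes "signed_digraph n E"
    and "i < n" and "j < n" and "i \<noteq> j"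
    and "(i, j, s) \<in> E"
    and "indeg E i = 1" and "outdeg E i = 1" and "indeg E j = 1"
    and "is_FDS n loY hiY h"
    and "interaction_graph n loY hiY h = E - {(i, j, s)}"
    and "degree_bounded n loY hiY h"
  shows "\<not> (\<exists>loX hiX f k. is_FDS n loX hiX f \<and> interaction_graph n loX hiX f = E \<and>
             degree_bounded n loX hiX f \<and> converges_toward n loX hiX f loY hiY h k)"
proof
  assume "\<exists>loX hiX f k. is_FDS n loX hiX f \<and> interaction_graph n loX hiX f = E \<and>
             degree_bounded n loX hiX f \<and> converges_toward n loX hiX f loY hiY h k"
  then obtain loX hiX f k where G: "interaction_graph n loX hiX f = E"
    and f_bounded: "degree_bounded n loX hiX f" and conv: "converges_toward n loX hiX f loY hiY h k"
    by blast
  have sub: "box n loY hiY \<subseteq> box n loX hiX" and agree: "\<forall>y\<in>box n loY hiY. f y = h y"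
    using conv by (auto simp: converges_toward_def)
  have Y_nonempty: "\<forall>k<n. loY k \<le> hiY k" using \<open>is_FDS n loY hiY h\<close> by (simp add: is_FDS_def)
  have "hiY i = loY i + 1"
    using degree_bounded_sink_width[OF \<open>degree_bounded n loY hiY h\<close> \<open>i < n\<close>] assms(4-7,10)
      outdeg_remove_only_out_arc indeg_remove_arc_elsewhere by simp
  moreover have "hiX i - loX i \<le> 1"
    using degree_bounded_width_le_outdeg[OF f_bounded \<open>i < n\<close>] G \<open>outdeg E i = 1\<close> by simp
  ultimately have lo_eq: "loX i = loY i" and hi_eq: "hiX i = hiY i"
    using box_subset_bounds[OF sub Y_nonempty \<open>i < n\<close>] by auto
  have "\<forall>k b. (k, j, b) \<in> interaction_graph n loX hiX f \<longrightarrow> k = i"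
    using indeg_one_unique_arc[OF \<open>indeg E j = 1\<close> \<open>(i, j, s) \<in> E\<close>] unfolding G by blast
  then obtain b where "(i, j, b) \<in> interaction_graph n loY hiY h"
    using arc_survives_convergence[OF sub agree Y_nonempty lo_eq hi_eq] G \<open>(i, j, s) \<in> E\<close>
    by blast
  then have "(i, j, b) \<in> E - {(i, j, s)}" unfolding assms(10) .
  then show False using indeg_one_unique_arc[OF \<open>indeg E j = 1\<close> \<open>(i, j, s) \<in> E\<close>] by blast
qed

end
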